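(* For every $\varepsilon>0$ and every integer $k\ge 2$, there exists a $C_{2k}$-free graph $G$ such that every bipartite subgraph of $G$ whose girth is greater than $2k$ has at most $\left(1-\frac{1}{2^{2k-2}}\right)\frac{2}{2k-1}\,e(G)\,(1+\varepsilon)$ edges.
   Context: $e(G)$ denotes the number of edges of a graph $G$. A graph is $C_{2k}$-free if it contains no cycle of length $2k$ as a subgraph. The girth of a graph is the length of a shortest cycle, and infinity if the graph has no cycle. *)

theory Defs
  imports Complex_Main
begin

definition simple_graph :: "'a set \<Rightarrow> 'a set set \<Rightarrow> bool" where
  "simple_graph V E \<longleftrightarrow> finite V \<and> (\<forall>e\<in>E. e \<subseteq> V \<and> card e = 2)"

definition is_cycle :: "'a set set \<Rightarrow> 'a list \<Rightarrow> bool" where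
  "is_cycle E vs \<longleftrightarrow> length vs \<ge> 3 \<and> distinct vs \<and>
     (\<forall>i < length vs. {vs ! i, vs ! ((i + 1) mod length vs)} \<in> E)"

definition cycle_free_len :: "'a set set \<Rightarrow> nat \<Rightarrow> bool" where
  "cycle_free_len E L \<longleftrightarrow> \<not> (\<exists>vs. is_cycle E vs \<and> length vs = L)"

definition girth_gt :: "'a set set \<Rightarrow> nat \<Rightarrow> bool" where
  "girth_gt E g \<longleftrightarrow> (\<forall>vs. is_cycle E vs \<longrightarrow> length vs > g)"

definition bipartite :: "'a set \<Rightarrow> 'a set set \<Rightarrow> bool" where
  "bipartite V H \<longleftrightarrow> (\<exists>A \<subseteq> V. \<forall>e\<in>H. card (e \<inter> A) = 1)"

end

theory Submission
  imports Defs "HOL-Library.FuncSet"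
begin

(* Take r = 2k - 1 and a random r-uniform hypergraph with m = C N hyperedges on N vertices,
   each hyperedge a uniformly random r-tuple. Deleting the degenerate hyperedges and those on
   Berge cycles of length at most 2k costs only O(1) hyperedges in expectation, while m grows
   linearly in N. Replacing every remaining hyperedge by a clique K_r gives edge-disjoint cliques
   and a C_2k-free graph: a 2k-cycle would pass through at least two cliques and hence give a
   short Berge cycle. A bipartite subgraph of girth > 2k meets each clique in a forest, so in at
   most r - 1 edges, and in no edge at all if the clique is monochromatic for the bipartition.
   A Chernoff bound, with a union bound over all 2^N bipartitions, shows that every bipartition
   leaves almost a 2/2^r = 1/2^(2k-2) fraction of the hyperedges monochromatic. Since
   e(G) = (r choose 2) times the number of cliques, the bound follows. Probabilities are
   replaced throughout by counting over all families of tuples. *)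

lemma sum_card_Collect_swap:
  assumes "finite A" "finite B"
  shows "(\<Sum>x\<in>A. card {y\<in>B. P x y}) = (\<Sum>y\<in>B. card {x\<in>A. P x y})"
proof -
  have "(\<Sum>x\<in>A. card {y\<in>B. P x y}) = (\<Sum>x\<in>A. \<Sum>y\<in>B. if P x y then 1 else 0)"
    using assms by (simp add: sum.If_cases Int_def conj_commute)
  also have "\<dots> = (\<Sum>y\<in>B. \<Sum>x\<in>A. if P x y then 1 else 0)" by (rule sum.swap)
  also have "\<dots> = (\<Sum>y\<in>B. card {x\<in>A. P x y})"
    using assms by (simp add: sum.If_cases Int_def conj_commute)
  finally show ?thesis .
qed

lemma card_le_prod_if_subset_PiE:
  assumes "finite I" "\<And>i. i \<in> I \<Longrightarrow> finite (T i)" "S \<subseteq> PiE I T"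
  shows "card S \<le> (\<Prod>i\<in>I. card (T i))"
  using card_mono[OF finite_PiE assms(3)] assms(1,2) by (simp add: card_PiE)

lemma prod_if_mem_set:
  assumes "set xs \<subseteq> {..<m}" "distinct xs"
  shows "(\<Prod>i<m. if i \<in> set xs then a else b) = a ^ length xs * b ^ (m - length xs)"
proof -
  have "(\<Prod>i<m. if i \<in> set xs then a else b) = (\<Prod>i\<in>set xs. a) * (\<Prod>i\<in>{..<m} - set xs. b)"
    using prod.If_cases[of "{..<m}" "\<lambda>i. i \<in> set xs" "\<lambda>_. a" "\<lambda>_. b"] assms(1)
    by (simp add: Int_absorb1 Diff_eq)
  then show ?thesis using assms by (simp add: card_Diff_subset distinct_card)
qed

lemma card_markov_le:
  fixes w :: "'a \<Rightarrow> nat"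
  assumes "finite F" and "(\<Sum>x\<in>F. w x) \<le> K * card F" and "0 < K"
  shows "2 * card {x\<in>F. 2 * K < w x} \<le> card F"
proof -
  have "card {x\<in>F. 2 * K < w x} * (2 * K) = (\<Sum>x\<in>{x\<in>F. 2 * K < w x}. 2 * K)" by simp
  also have "\<dots> \<le> (\<Sum>x\<in>{x\<in>F. 2 * K < w x}. w x)" by (intro sum_mono) auto
  also have "\<dots> \<le> (\<Sum>x\<in>F. w x)" using assms(1) by (intro sum_mono2) auto
  also have "\<dots> \<le> K * card F" by (rule assms(2))
  finally have "K * (2 * card {x\<in>F. 2 * K < w x}) \<le> K * card F" by (simp add: algebra_simps)
  then show ?thesis using assms(3) by (simp only: mult_le_cancel1)
qed

lemma nth_neq_nth_succ_mod:
  assumes "distinct xs" "2 \<le> length xs" "l < length xs"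
  shows "xs ! l \<noteq> xs ! ((l + 1) mod length xs)"
proof
  assume "xs ! l = xs ! ((l + 1) mod length xs)"
  moreover have "(l + 1) mod length xs < length xs" using assms(3) by (intro mod_less_divisor) auto
  ultimately have eq: "l = (l + 1) mod length xs" using assms(1,3) nth_eq_iff_index_eq by blast
  show False
  proof (cases "l + 1 < length xs")
    case True then show False using eq by simp
  next
    case False
    then have "l + 1 = length xs" using assms(3) by simp
    then show False using eq assms(2) by simp
  qed
qed

lemma power_mean_two:
  fixes a b :: real
  assumes "a \<ge> 0" "b \<ge> 0" "r \<ge> 1"
  shows "2 / 2 ^ r * (a + b) ^ r \<le> a ^ r + b ^ r"
  using assms(3)
proof (induction r rule: dec_induct)
  case base then show ?case by simp
next
  case (step n)
  have ch: "(a + b) * (a ^ n + b ^ n) \<le> 2 * (a ^ Suc n + b ^ Suc n)"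
  proof -
    have "0 \<le> (a - b) * (a ^ n - b ^ n)"
    proof (cases "a \<le> b")
      case True then have "a ^ n \<le> b ^ n" using assms by (simp add: power_mono)
      then show ?thesis using True by (simp add: mult_nonpos_nonpos)
    next
      case False then have "b ^ n \<le> a ^ n" using assms by (simp add: power_mono)
      then show ?thesis using False by simp
    qed
    then show ?thesis by (simp add: algebra_simps)
  qed
  have "2 / 2 ^ Suc n * (a + b) ^ Suc n = (a + b) * (2 / 2 ^ n * (a + b) ^ n) / 2" by (simp add: field_simps)
  also have "\<dots> \<le> (a + b) * (a ^ n + b ^ n) / 2"
    using step.IH assms by (intro divide_right_mono mult_left_mono) auto
  also have "\<dots> \<le> a ^ Suc n + b ^ Suc n" using ch by simp
  finally show ?case .
qed

definition is_path :: "'a set set \<Rightarrow> 'a list \<Rightarrow> bool" where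
  "is_path F P \<longleftrightarrow> P \<noteq> [] \<and> distinct P \<and> (\<forall>l. l + 1 < length P \<longrightarrow> {P!l, P!(l+1)} \<in> F)"

lemma is_cycle_mono: "is_cycle F vs \<Longrightarrow> F \<subseteq> G \<Longrightarrow> is_cycle G vs"
  unfolding is_cycle_def by blast

lemma is_path_snoc:
  assumes "is_path F P" "w \<notin> set P" "{last P, w} \<in> F"
  shows "is_path F (P @ [w])"
  unfolding is_path_def
proof (intro conjI allI impI)
  show "P @ [w] \<noteq> []" "distinct (P @ [w])" using assms(1,2) unfolding is_path_def by auto
  fix l assume l: "l + 1 < length (P @ [w])"
  show "{(P @ [w]) ! l, (P @ [w]) ! (l + 1)} \<in> F"
  proof (cases "l + 1 < length P")
    case True then show ?thesis using assms(1) unfolding is_path_def by (simp add: nth_append)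
  next
    case False
    then have "l = length P - 1" "P \<noteq> []" using l assms(1) unfolding is_path_def by auto
    then show ?thesis using assms(3) by (simp add: nth_append last_conv_nth)
  qed
qed

lemma is_cycle_drop:
  assumes "is_path F P" "i + 2 < length P" "{last P, P ! i} \<in> F"
  shows "is_cycle F (drop i P)"
  unfolding is_cycle_def
proof (intro conjI allI impI)
  show "3 \<le> length (drop i P)" "distinct (drop i P)" using assms(1,2) unfolding is_path_def by auto
  fix l assume l: "l < length (drop i P)"
  show "{drop i P ! l, drop i P ! ((l + 1) mod length (drop i P))} \<in> F"
  proof (cases "l + 1 < length (drop i P)")
    case True then show ?thesis using assms(1) unfolding is_path_def by simp
  next
    case False
    then have "l + 1 = length (drop i P)" using l by simp
    then have "i + l = length P - 1" "(l + 1) mod length (drop i P) = 0" by auto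
    moreover have "last P = P ! (length P - 1)" using assms(2) by (subst last_conv_nth) auto
    ultimately show ?thesis using assms(3) by (simp add: insert_commute)
  qed
qed

lemma acyclic_has_leaf:
  assumes fin: "finite W" and FW: "\<forall>e\<in>F. e \<subseteq> W \<and> card e = 2"
    and acyc: "\<forall>vs. \<not> is_cycle F vs" and ne: "F \<noteq> {}"
  shows "\<exists>v w. v \<in> W \<and> w \<in> W \<and> v \<noteq> w \<and> (\<forall>e\<in>F. v \<in> e \<longrightarrow> e = {v, w})"
proof -
  define Q where "Q = (\<lambda>P. is_path F P \<and> set P \<subseteq> W)"
  obtain u v where "{u, v} \<in> F" "u \<noteq> v" using ne FW card_2_iff by (metis ex_in_conv)
  then have Quv: "Q [u, v]" using FW unfolding Q_def is_path_def by auto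
  have "\<forall>P. Q P \<longrightarrow> length P < Suc (card W)"
    using fin unfolding Q_def is_path_def by (metis card_mono distinct_card le_imp_less_Suc)
  then obtain P where P: "Q P" and Pmax: "\<forall>P'. Q P' \<longrightarrow> length P' \<le> length P"
    using ex_has_greatest_nat[of Q "[u,v]" length "Suc (card W)"] Quv by blast
  have n2: "2 \<le> length P" using Pmax Quv by force
  define x where "x = last P"
  define y where "y = P ! (length P - 2)"
  have path: "is_path F P" and PW: "set P \<subseteq> W" using P unfolding Q_def by auto
  have x: "x = P ! (length P - 1)" unfolding x_def using n2 by (subst last_conv_nth) auto
  have "x \<noteq> y" using path n2 unfolding x y_def is_path_def by (simp add: nth_eq_iff_index_eq)
  moreover have "x \<in> W" "y \<in> W" using PW n2 unfolding x y_def by auto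
  moreover have "e = {x, y}" if eF: "e \<in> F" and xe: "x \<in> e" for e
  proof -
    obtain w where ew: "e = {x, w}" "w \<noteq> x" using FW eF xe card_2_iff by (metis insert_commute insertE singletonD)
    have "w \<in> set P"
    proof (rule ccontr)
      assume "w \<notin> set P"
      then have "Q (P @ [w])" using is_path_snoc[OF path] eF ew FW PW unfolding Q_def x_def by auto
      then show False using Pmax by fastforce
    qed
    then obtain i where i: "i < length P" "P ! i = w" by (auto simp: in_set_conv_nth)
    have "\<not> i + 2 < length P"
      using is_cycle_drop[OF path] acyc eF ew i unfolding x_def by metis
    then have "i = length P - 2" using i ew x by (cases "i = length P - 1") auto
    then show ?thesis using ew i unfolding y_def by simp
  qed
  ultimately show ?thesis by blast
qed

lemma card_acyclic_edges_le:
  "finite W \<Longrightarrow> \<forall>e\<in>F. e \<subseteq> W \<and> card e = 2 \<Longrightarrow> \<forall>vs. \<not> is_cycle F vs \<Longrightarrow> card F \<le> card W - 1"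
proof (induction "card W" arbitrary: W F rule: less_induct)
  case less
  show ?case
  proof (cases "F = {}")
    case True then show ?thesis by simp
  next
    case False
    obtain v w where vw: "v \<in> W" "w \<in> W" "v \<noteq> w" "\<forall>e\<in>F. v \<in> e \<longrightarrow> e = {v, w}"
      using acyclic_has_leaf[OF less.prems False] by blast
    define F' where "F' = {e\<in>F. v \<notin> e}"
    have sub: "F \<subseteq> insert {v, w} F'" using vw unfolding F'_def by blast
    have F'W: "\<forall>e\<in>F'. e \<subseteq> W - {v} \<and> card e = 2" using less.prems(2) unfolding F'_def by blast
    have acF': "\<forall>vs. \<not> is_cycle F' vs" using less.prems(3) is_cycle_mono unfolding F'_def
      by (metis (no_types, lifting) mem_Collect_eq subsetI)
    have lt: "card (W - {v}) < card W" using card_Diff1_less[OF less.prems(1) vw(1)] .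
    have IH: "card F' \<le> card (W - {v}) - 1"
      using less.hyps[OF lt _ F'W acF'] less.prems(1) by simp
    have finF': "finite F'"
    proof -
      have "F' \<subseteq> Pow W" using F'W by blast
      then show ?thesis using less.prems(1) finite_subset by blast
    qed
    have "card F \<le> card (insert {v, w} F')" using sub finF' by (simp add: card_mono)
    also have "\<dots> \<le> card F' + 1" using finF' by (simp add: card_insert_if)
    also have "\<dots> \<le> card W - 1"
    proof -
      have "card W \<ge> 2" using vw less.prems(1)
        by (metis card_2_iff card_mono empty_subsetI insert_subset)
      then show ?thesis using IH vw less.prems(1) by simp
    qed
    finally show ?thesis .
  qed
qed

(* is lists hyperedge indices and ws distinct vertices: ws ! l and its cyclic successor both lie
   in the hyperedge K (is ! l). When is is distinct as well, this is a Berge cycle. *)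
definition closed_berge_walk :: "(nat \<Rightarrow> 'a set) \<Rightarrow> nat list \<Rightarrow> 'a list \<Rightarrow> bool" where
  "closed_berge_walk K is ws \<longleftrightarrow> length is = length ws \<and> distinct ws \<and>
     (\<forall>l<length is. ws!l \<in> K (is!l) \<and> ws!((l+1) mod length is) \<in> K (is!l))"

lemma closed_berge_walk_shortcut:
  assumes w: "closed_berge_walk K is ws" and ad: "a + d < length is" and d2: "2 \<le> d"
    and eq: "is ! a = is ! (a + d)"
  shows "closed_berge_walk K (take d (drop a is)) (ws ! (a + d) # take (d - 1) (drop (Suc a) ws))"
  unfolding closed_berge_walk_def
proof (intro conjI allI impI)
  have lw: "length ws = length is" and dw: "distinct ws"
    and c: "\<And>l. l < length is \<Longrightarrow> ws!l \<in> K (is!l) \<and> ws!((l+1) mod length is) \<in> K (is!l)"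
    using w unfolding closed_berge_walk_def by auto
  define ws' where "ws' = ws ! (a + d) # take (d - 1) (drop (Suc a) ws)"
  have len: "length (take d (drop a is)) = d" "length ws' = d" using ad d2 lw unfolding ws'_def by auto
  have ws': "ws' ! l = ws ! (if l = 0 then a + d else a + l)" if "l < d" for l
    using that ad lw unfolding ws'_def by (auto simp: nth_Cons')
  show "length (take d (drop a is)) = length ws'" using len by simp
  show "distinct ws'"
    using dw ad lw unfolding ws'_def by (auto simp: in_set_conv_nth nth_eq_iff_index_eq)
  fix l assume "l < length (take d (drop a is))"
  then have l: "l < d" using len by simp
  then have is': "take d (drop a is) ! l = is ! (a + l)" using ad by simp
  show "ws' ! l \<in> K (take d (drop a is) ! l)"
    using c[of "a + l"] c[of "a + d"] ws'[OF l] is' eq l ad by (cases "l = 0") auto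
  show "ws' ! ((l + 1) mod length (take d (drop a is))) \<in> K (take d (drop a is) ! l)"
  proof (cases "l + 1 < d")
    case True
    then show ?thesis using c[of "a + l"] ws'[of "l + 1"] is' ad len by simp
  next
    case False
    then have d_eq: "d = l + 1" using l by simp
    have "ws ! ((a + l + 1) mod length is) \<in> K (is ! (a + l))" using c[of "a + l"] l ad by simp
    then show ?thesis using ws'[of 0] is' len ad unfolding d_eq by simp
  qed
qed
lemma nth_take_append_drop_skip:
  assumes "l < length xs - 1" and "Suc a < length xs"
  shows "(take (Suc a) xs @ drop (Suc (Suc a)) xs) ! l = xs ! (if l \<le> a then l else Suc l)"
  using assms by (auto simp: nth_append)

lemma closed_berge_walk_drop_repeat:
  assumes w: "closed_berge_walk K is ws" and a: "Suc a < length is" and eq: "is ! a = is ! Suc a"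
  shows "closed_berge_walk K (take (Suc a) is @ drop (Suc (Suc a)) is) (take (Suc a) ws @ drop (Suc (Suc a)) ws)"
  unfolding closed_berge_walk_def
proof (intro conjI allI impI)
  define n where "n = length is"
  define f where "f = (\<lambda>l::nat. if l \<le> a then l else Suc l)"
  define is' where "is' = take (Suc a) is @ drop (Suc (Suc a)) is"
  define ws' where "ws' = take (Suc a) ws @ drop (Suc (Suc a)) ws"
  have lw: "length ws = n" and dw: "distinct ws"
    and c: "\<And>l. l < n \<Longrightarrow> ws!l \<in> K (is!l) \<and> ws!((l+1) mod n) \<in> K (is!l)"
    using w unfolding closed_berge_walk_def n_def by auto
  have len: "length is' = n - 1" "length ws' = n - 1" using a lw unfolding is'_def ws'_def n_def by auto
  have nth': "is' ! l = is ! f l" "ws' ! l = ws ! f l" if "l < n - 1" for l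
    using nth_take_append_drop_skip[OF _ a, of l] nth_take_append_drop_skip[of l ws a] that a lw
    unfolding is'_def ws'_def f_def n_def by auto
  show "length is' = length ws'" using len by simp
  show "distinct ws'" using dw unfolding ws'_def by (simp add: set_take_disj_set_drop_if_distinct)
  fix l assume "l < length is'"
  then have l: "l < n - 1" using len by simp
  then show "ws' ! l \<in> K (is' ! l)" using c[of "f l"] nth'[OF l] unfolding f_def by auto
  define g where "g = (if l = a then Suc a else f l)"
  have g: "g < n" "is ! g = is ! f l" using l a eq unfolding g_def f_def n_def by auto
  have "ws' ! ((l + 1) mod length is') = ws ! ((g + 1) mod n)"
  proof (cases "l + 1 < n - 1")
    case True
    then have "f (l + 1) = g + 1" "g + 1 < n" unfolding g_def f_def by auto
    then show ?thesis using nth'(2)[OF True] True len by simp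
  next
    case False
    then have "l + 1 = n - 1" "g + 1 = n" using l a unfolding g_def f_def n_def by auto
    then show ?thesis using nth'(2)[of 0] len l unfolding f_def by simp
  qed
  then show "ws' ! ((l + 1) mod length is') \<in> K (is' ! l)" using c[OF g(1)] g(2) nth'(1)[OF l] by simp
qed
lemma set_take_append_drop_skip:
  assumes "Suc a < length xs" and "xs ! a = xs ! Suc a"
  shows "set (take (Suc a) xs @ drop (Suc (Suc a)) xs) = set xs"
proof -
  have "set xs = set (take (Suc a) xs) \<union> insert (xs ! Suc a) (set (drop (Suc (Suc a)) xs))"
    by (subst id_take_nth_drop[OF assms(1)]) simp
  moreover have "xs ! Suc a \<in> set (take (Suc a) xs)"
    using assms by (simp add: take_Suc_conv_app_nth)
  ultimately show ?thesis by auto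
qed

(* Take the smallest gap d between two equal entries of is. For d = 1 the two equal neighbours
   are merged and we recurse; otherwise the d hyperedges starting at the repetition are
   distinct and form a Berge cycle. *)
lemma closed_berge_walk_reduce:
  "closed_berge_walk K is ws \<Longrightarrow> 2 \<le> card (set is) \<Longrightarrow>
   \<exists>is' ws'. closed_berge_walk K is' ws' \<and> distinct is' \<and> 2 \<le> length is' \<and> length is' \<le> length is \<and>
     set is' \<subseteq> set is"
proof (induction "length is" arbitrary: "is" ws rule: less_induct)
  case less
  show ?case
  proof (cases "distinct is")
    case True
    then show ?thesis using less.prems by (metis distinct_card order_refl)
  next
    case False
    define D where "D = {d. 0 < d \<and> (\<exists>a. a + d < length is \<and> is ! a = is ! (a + d))}"
    obtain p q where "p < q" "q < length is" "is ! p = is ! q"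
      using False by (metis distinct_conv_nth linorder_neqE_nat)
    then have "q - p \<in> D" unfolding D_def by (auto intro!: exI[of _ p])
    define d where "d = (LEAST d. d \<in> D)"
    have dmin: "\<And>d'. d' \<in> D \<Longrightarrow> d \<le> d'" unfolding d_def by (rule Least_le)
    have "d \<in> D" unfolding d_def by (rule LeastI) fact
    then obtain a where a: "a + d < length is" "is ! a = is ! (a + d)" "0 < d" unfolding D_def by blast
    show ?thesis
    proof (cases "d = 1")
      case True
      then have a': "Suc a < length is" "is ! a = is ! Suc a" using a by auto
      let ?is' = "take (Suc a) is @ drop (Suc (Suc a)) is"
      have "length ?is' < length is" using a' by simp
      moreover note walk = closed_berge_walk_drop_repeat[OF less.prems(1) a']
      moreover have "set ?is' = set is" by (rule set_take_append_drop_skip[OF a'])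
      ultimately show ?thesis using less.hyps[OF _ walk] less.prems(2) by (metis order.strict_implies_order le_trans)
    next
      case False
      have neq: "is ! (a + x) \<noteq> is ! (a + y)" if "x < y" "y < d" for x y
      proof
        assume "is ! (a + x) = is ! (a + y)"
        then have "y - x \<in> D" using that a(1) unfolding D_def by (auto intro!: exI[of _ "a + x"])
        then show False using dmin[of "y - x"] that by simp
      qed
      have "distinct (take d (drop a is))"
      proof (rule distinct_conv_nth[THEN iffD2], intro allI impI)
        fix x y assume xy: "x < length (take d (drop a is))" "y < length (take d (drop a is))" "x \<noteq> y"
        then have "x < d" "y < d" by auto
        then have "is ! (a + x) \<noteq> is ! (a + y)" using neq[of x y] neq[of y x] xy(3) by (cases "x < y") auto
        then show "take d (drop a is) ! x \<noteq> take d (drop a is) ! y" using \<open>x < d\<close> \<open>y < d\<close> a(1) by simp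
      qed
      moreover have "length (take d (drop a is)) = d" "set (take d (drop a is)) \<subseteq> set is"
        using a(1) by (auto dest: in_set_takeD in_set_dropD)
      moreover have "2 \<le> d" using False a(3) by simp
      moreover note closed_berge_walk_shortcut[OF less.prems(1) a(1) this a(2)]
      ultimately show ?thesis using a(1)
        by (intro exI[of _ "take d (drop a is)"] exI[of _ "ws ! (a + d) # take (d - 1) (drop (Suc a) ws)"]) auto
    qed
  qed
qed

definition berge_girth_gt :: "(nat \<Rightarrow> 'a set) \<Rightarrow> nat set \<Rightarrow> nat \<Rightarrow> bool" where
  "berge_girth_gt K G L \<longleftrightarrow>
     (\<forall>is ws. closed_berge_walk K is ws \<and> distinct is \<and> 2 \<le> length is \<and> set is \<subseteq> G \<longrightarrow> L < length is)"

definition clique_edges :: "'a set \<Rightarrow> 'a set set" where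
  "clique_edges S = {e. e \<subseteq> S \<and> card e = 2}"

definition monochromatic :: "'a set \<Rightarrow> 'a set \<Rightarrow> bool" where
  "monochromatic A S \<longleftrightarrow> S \<subseteq> A \<or> S \<inter> A = {}"

(* Choosing a clique through every edge of a cycle of length L gives a closed Berge walk, which
   visits at least two hyperedges since a single clique has only r < L vertices. *)
lemma cycle_free_len_clique_union:
  assumes cK: "\<forall>i\<in>G. card (K i) = r" and fK: "\<forall>i\<in>G. finite (K i)" and rL: "r < L"
    and girth: "berge_girth_gt K G L"
  shows "cycle_free_len (\<Union>i\<in>G. clique_edges (K i)) L"
  unfolding cycle_free_len_def
proof
  assume "\<exists>vs. is_cycle (\<Union>i\<in>G. clique_edges (K i)) vs \<and> length vs = L"
  then obtain vs where cy: "is_cycle (\<Union>i\<in>G. clique_edges (K i)) vs" and lv: "length vs = L" by blast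
  have ex: "\<forall>l<L. \<exists>i\<in>G. vs!l \<in> K i \<and> vs!((l+1) mod L) \<in> K i"
    using cy lv unfolding is_cycle_def clique_edges_def by fastforce
  define \<sigma> where "\<sigma> = (\<lambda>l. SOME i. i \<in> G \<and> vs!l \<in> K i \<and> vs!((l+1) mod L) \<in> K i)"
  have \<sigma>: "\<And>l. l < L \<Longrightarrow> \<sigma> l \<in> G \<and> vs!l \<in> K (\<sigma> l) \<and> vs!((l+1) mod L) \<in> K (\<sigma> l)"
    unfolding \<sigma>_def using ex by (metis (mono_tags, lifting) someI_ex)
  define "is" where "is = map \<sigma> [0..<L]"
  have w: "closed_berge_walk K is vs" unfolding closed_berge_walk_def is_def using \<sigma> cy lv unfolding is_cycle_def by simp
  have sG: "set is \<subseteq> G" unfolding is_def using \<sigma> by auto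
  have L3: "L \<ge> 3" using cy lv unfolding is_cycle_def by simp
  have c2: "2 \<le> card (set is)"
  proof (rule ccontr)
    assume "\<not> 2 \<le> card (set is)"
    moreover have "set is \<noteq> {}" unfolding is_def using L3 by simp
    ultimately have "card (set is) = 1" by (simp add: Suc_leI card_gt_0_iff le_antisym)
    then obtain i0 where i0: "set is = {i0}" by (meson card_1_singletonE)
    have "\<forall>l<L. \<sigma> l = i0" using i0 unfolding is_def by auto
    then have "set vs \<subseteq> K i0" using \<sigma> lv by (auto simp: in_set_conv_nth)
    moreover have i0G: "i0 \<in> G" using i0 sG by auto
    moreover have "finite (K i0)" using fK i0G by blast
    ultimately have "card (set vs) \<le> r" using cK by (metis card_mono)
    moreover have "card (set vs) = L" using cy lv unfolding is_cycle_def by (simp add: distinct_card)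
    ultimately show False using rL by simp
  qed
  obtain is' ws' where "closed_berge_walk K is' ws'" "distinct is'" "2 \<le> length is'" "length is' \<le> length is" "set is' \<subseteq> set is"
    using closed_berge_walk_reduce[OF w c2] by blast
  moreover have "length is = L" unfolding is_def by simp
  ultimately show False using girth sG unfolding berge_girth_gt_def by fastforce
qed

lemma clique_edges_disjoint:
  assumes girth: "berge_girth_gt K G L"
    and L2: "2 \<le> L" and i: "i \<in> G" "i' \<in> G" "i \<noteq> i'"
  shows "clique_edges (K i) \<inter> clique_edges (K i') = {}"
proof (rule ccontr)
  assume "clique_edges (K i) \<inter> clique_edges (K i') \<noteq> {}"
  then obtain e where e: "e \<subseteq> K i" "e \<subseteq> K i'" "card e = 2" unfolding clique_edges_def by blast
  then obtain u v where uv: "e = {u, v}" "u \<noteq> v" by (meson card_2_iff)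
  have "closed_berge_walk K [i, i'] [u, v]" unfolding closed_berge_walk_def using e uv by (auto simp: less_Suc_eq)
  moreover have "distinct [i, i']" "2 \<le> length [i, i']" "length [i, i'] \<le> L" "set [i, i'] \<subseteq> G"
    using i L2 by auto
  ultimately show False using girth unfolding berge_girth_gt_def by fastforce
qed

lemma card_clique_union:
  assumes fin: "finite G" and cK: "\<forall>i\<in>G. card (K i) = r" and fK: "\<forall>i\<in>G. finite (K i)"
    and girth: "berge_girth_gt K G L"
    and L2: "2 \<le> L"
  shows "card (\<Union>i\<in>G. clique_edges (K i)) = card G * (r choose 2)"
proof -
  have finK: "\<And>i. i \<in> G \<Longrightarrow> finite (K i)" using fK by blast
  have "card (\<Union>i\<in>G. clique_edges (K i)) = (\<Sum>i\<in>G. card (clique_edges (K i)))"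
  proof (rule card_UN_disjoint[OF fin])
    show "\<forall>i\<in>G. finite (clique_edges (K i))"
      using finK unfolding clique_edges_def by (auto intro: finite_subset[of _ "Pow _"])
    show "\<forall>i\<in>G. \<forall>j\<in>G. i \<noteq> j \<longrightarrow> clique_edges (K i) \<inter> clique_edges (K j) = {}"
      using clique_edges_disjoint[OF girth L2] by blast
  qed
  also have "\<dots> = (\<Sum>i\<in>G. r choose 2)"
    using finK cK unfolding clique_edges_def by (intro sum.cong) (auto simp: n_subsets)
  finally show ?thesis by simp
qed

lemma bipartite_disjoint_clique_edges:
  assumes "monochromatic A S" and "\<forall>e\<in>H. card (e \<inter> A) = 1"
  shows "H \<inter> clique_edges S = {}"
proof (rule ccontr)
  assume "H \<inter> clique_edges S \<noteq> {}"
  then obtain e where e: "e \<in> H" "e \<subseteq> S" "card e = 2" unfolding clique_edges_def by blast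
  then have "e \<inter> A = e \<or> e \<inter> A = {}" using assms(1) unfolding monochromatic_def by blast
  then show False using assms(2) e by fastforce
qed

lemma card_girth_gt_clique_edges_le:
  assumes "finite S" and "card S < L" and "girth_gt H L"
  shows "card (H \<inter> clique_edges S) \<le> card S - 1"
proof -
  have "\<forall>vs. \<not> is_cycle (H \<inter> clique_edges S) vs"
  proof (intro allI notI)
    fix vs assume cy: "is_cycle (H \<inter> clique_edges S) vs"
    then have "L < length vs" using assms(3) is_cycle_mono unfolding girth_gt_def by blast
    moreover have "set vs \<subseteq> S"
    proof
      fix x assume "x \<in> set vs"
      then obtain l where l: "l < length vs" "vs!l = x" by (auto simp: in_set_conv_nth)
      then have "{vs!l, vs!((l+1) mod length vs)} \<in> clique_edges S" using cy unfolding is_cycle_def by blast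
      then show "x \<in> S" using l unfolding clique_edges_def by auto
    qed
    then have "card (set vs) \<le> card S" using assms(1) by (simp add: card_mono)
    moreover have "card (set vs) = length vs" using cy unfolding is_cycle_def by (simp add: distinct_card)
    ultimately show False using assms(2) by simp
  qed
  moreover have "\<forall>e\<in>H \<inter> clique_edges S. e \<subseteq> S \<and> card e = 2" unfolding clique_edges_def by blast
  ultimately show ?thesis using card_acyclic_edges_le[OF assms(1)] by blast
qed

lemma card_bipartite_girth_subgraph_le:
  assumes fin: "finite G" and cK: "\<forall>i\<in>G. card (K i) = r" and fK: "\<forall>i\<in>G. finite (K i)" and rL: "r < L"
    and HE: "H \<subseteq> (\<Union>i\<in>G. clique_edges (K i))" and bip: "\<forall>e\<in>H. card (e \<inter> A) = 1"
    and gg: "girth_gt H L"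
  shows "card H \<le> (r - 1) * card {i\<in>G. \<not> monochromatic A (K i)}"
proof -
  have "H = (\<Union>i\<in>G. H \<inter> clique_edges (K i))" using HE by blast
  then have "card H \<le> (\<Sum>i\<in>G. card (H \<inter> clique_edges (K i)))" by (metis card_UN_le fin)
  also have "\<dots> \<le> (\<Sum>i\<in>G. (if monochromatic A (K i) then 0 else r - 1))"
  proof (intro sum_mono)
    fix i assume "i \<in> G"
    then show "card (H \<inter> clique_edges (K i)) \<le> (if monochromatic A (K i) then 0 else r - 1)"
      using bipartite_disjoint_clique_edges[OF _ bip, of "K i"]
        card_girth_gt_clique_edges_le[OF _ _ gg, of "K i"] cK fK rL by auto
  qed
  also have "\<dots> = (r - 1) * card {i\<in>G. \<not> monochromatic A (K i)}"
  proof -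
    have "G \<inter> - {i. monochromatic A (K i)} = {i \<in> G. \<not> monochromatic A (K i)}" by blast
    then show ?thesis using fin by (simp add: sum.If_cases mult.commute)
  qed
  finally show ?thesis .
qed

definition tuples :: "nat \<Rightarrow> nat \<Rightarrow> (nat \<Rightarrow> nat) set" where
  "tuples N r = PiE {..<r} (\<lambda>_. {..<N})"

(* X \<in> tuple_families N r m models the random hypergraph on {..<N} whose hyperedge i is the
   image of the r-tuple X i; probabilities become counts over all such families. *)
definition tuple_families :: "nat \<Rightarrow> nat \<Rightarrow> nat \<Rightarrow> (nat \<Rightarrow> nat \<Rightarrow> nat) set" where
  "tuple_families N r m = PiE {..<m} (\<lambda>_. tuples N r)"

lemma card_tuples: "card (tuples N r) = N ^ r" unfolding tuples_def by (simp add: card_PiE)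
lemma finite_tuples: "finite (tuples N r)" unfolding tuples_def by (simp add: finite_PiE)
lemma card_tuple_families: "card (tuple_families N r m) = N ^ (r * m)" unfolding tuple_families_def by (simp add: card_PiE card_tuples power_mult)
lemma finite_tuple_families: "finite (tuple_families N r m)" unfolding tuple_families_def by (simp add: finite_PiE finite_tuples)

definition monochromatic_tuples :: "nat \<Rightarrow> nat \<Rightarrow> nat set \<Rightarrow> (nat \<Rightarrow> nat) set" where
  "monochromatic_tuples N r A = {t\<in>tuples N r. monochromatic A (t ` {..<r})}"

lemma card_tuples_two_coords_fixed:
  assumes "p < r" "q < r" "p \<noteq> q"
  shows "card {t\<in>tuples N r. t p = a \<and> t q = b} \<le> N ^ (r - 2)"
proof -
  define T where "T = (\<lambda>x. if x = p then {a} else if x = q then {b} else {..<N})"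
  have "card {t\<in>tuples N r. t p = a \<and> t q = b} \<le> (\<Prod>x<r. card (T x))"
    by (rule card_le_prod_if_subset_PiE) (auto simp: T_def tuples_def PiE_iff extensional_def)
  also have "\<dots> = (\<Prod>x\<in>{..<r} - {p, q}. N)"
    using assms by (intro prod.mono_neutral_cong_right) (auto simp: T_def)
  also have "\<dots> = N ^ (r - 2)" using assms by (simp add: card_Diff_subset numeral_2_eq_2)
  finally show ?thesis .
qed

lemma card_tuples_hitting_pair:
  assumes "a \<noteq> b"
  shows "card {t\<in>tuples N r. a \<in> t ` {..<r} \<and> b \<in> t ` {..<r}} \<le> r * r * N ^ (r - 2)"
proof -
  have "{t\<in>tuples N r. a \<in> t ` {..<r} \<and> b \<in> t ` {..<r}} \<subseteq>
        (\<Union>p<r. \<Union>q\<in>{..<r} - {p}. {t\<in>tuples N r. t p = a \<and> t q = b})"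
    using assms by auto
  then have "card {t\<in>tuples N r. a \<in> t ` {..<r} \<and> b \<in> t ` {..<r}} \<le>
      card (\<Union>p<r. \<Union>q\<in>{..<r} - {p}. {t\<in>tuples N r. t p = a \<and> t q = b})"
    by (intro card_mono) (auto intro: finite_subset[OF _ finite_tuples])
  also have "\<dots> \<le> (\<Sum>p<r. card (\<Union>q\<in>{..<r} - {p}. {t\<in>tuples N r. t p = a \<and> t q = b}))"
    by (rule card_UN_le) simp
  also have "\<dots> \<le> (\<Sum>p<r. \<Sum>q\<in>{..<r} - {p}. card {t\<in>tuples N r. t p = a \<and> t q = b})"
    by (intro sum_mono card_UN_le) simp
  also have "\<dots> \<le> (\<Sum>p<r. \<Sum>q\<in>{..<r} - {p}. N ^ (r - 2))"
    by (intro sum_mono card_tuples_two_coords_fixed) auto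
  also have "\<dots> \<le> (\<Sum>p<r. \<Sum>q<r. N ^ (r - 2))"
    by (intro sum_mono sum_mono2) auto
  also have "\<dots> = r * r * N ^ (r - 2)" by simp
  finally show ?thesis .
qed

lemma card_non_injective_tuples:
  assumes "r \<ge> 2"
  shows "card {t\<in>tuples N r. \<not> inj_on t {..<r}} \<le> r * r * N ^ (r - 1)"
proof -
  have "{t\<in>tuples N r. \<not> inj_on t {..<r}} \<subseteq>
        (\<Union>p<r. \<Union>q\<in>{..<r} - {p}. \<Union>a<N. {t\<in>tuples N r. t p = a \<and> t q = a})"
    unfolding inj_on_def tuples_def by (auto simp: PiE_iff)
  then have "card {t\<in>tuples N r. \<not> inj_on t {..<r}} \<le>
      card (\<Union>p<r. \<Union>q\<in>{..<r} - {p}. \<Union>a<N. {t\<in>tuples N r. t p = a \<and> t q = a})"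
    by (intro card_mono) (auto intro: finite_subset[OF _ finite_tuples])
  also have "\<dots> \<le> (\<Sum>p<r. card (\<Union>q\<in>{..<r} - {p}. \<Union>a<N. {t\<in>tuples N r. t p = a \<and> t q = a}))"
    by (rule card_UN_le) simp
  also have "\<dots> \<le> (\<Sum>p<r. \<Sum>q\<in>{..<r} - {p}. card (\<Union>a<N. {t\<in>tuples N r. t p = a \<and> t q = a}))"
    by (intro sum_mono card_UN_le) simp
  also have "\<dots> \<le> (\<Sum>p<r. \<Sum>q\<in>{..<r} - {p}. \<Sum>a<N. card {t\<in>tuples N r. t p = a \<and> t q = a})"
    by (intro sum_mono card_UN_le) simp
  also have "\<dots> \<le> (\<Sum>p<r. \<Sum>q\<in>{..<r} - {p}. \<Sum>a<N. N ^ (r - 2))"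
    by (intro sum_mono card_tuples_two_coords_fixed) auto
  also have "\<dots> \<le> (\<Sum>p<r. \<Sum>q<r. N * N ^ (r - 2))"
    by (intro sum_mono sum_mono2) auto
  also have "\<dots> = r * r * N ^ (r - 1)"
  proof -
    have "r - 1 = Suc (r - 2)" using assms by simp
    then have "N * N ^ (r - 2) = N ^ (r - 1)" by simp
    then show ?thesis by simp
  qed
  finally show ?thesis .
qed

lemma card_monochromatic_tuples_ge:
  assumes A: "A \<subseteq> {..<N}" and r: "r \<ge> 1"
  shows "2 / 2 ^ r * real N ^ r \<le> real (card (monochromatic_tuples N r A))"
proof -
  define A' where "A' = {..<N} - A"
  have finA: "finite A" "finite A'" using A finite_subset unfolding A'_def by auto
  have "PiE {..<r} (\<lambda>_. A) \<inter> PiE {..<r} (\<lambda>_. A') = {}"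
    using r unfolding A'_def by (force simp: PiE_iff)
  then have "card (PiE {..<r} (\<lambda>_. A) \<union> PiE {..<r} (\<lambda>_. A')) = card A ^ r + card A' ^ r"
    using finA by (simp add: card_Un_disjoint card_PiE finite_PiE)
  moreover have "PiE {..<r} (\<lambda>_. A) \<union> PiE {..<r} (\<lambda>_. A') \<subseteq> {t\<in>tuples N r. monochromatic A (t ` {..<r})}"
    using A unfolding A'_def tuples_def monochromatic_def by (auto simp: PiE_iff)
  ultimately have le: "card A ^ r + card A' ^ r \<le> card {t\<in>tuples N r. monochromatic A (t ` {..<r})}"
    by (metis (no_types, lifting) card_mono finite_tuples mem_Collect_eq subsetI finite_subset)
  have "card A \<le> N" using card_mono[OF finite_lessThan A] by simp
  then have "real (card A') = real N - real (card A)"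
    using A finA unfolding A'_def by (simp add: card_Diff_subset of_nat_diff)
  then have "2 / 2 ^ r * real N ^ r \<le> real (card A) ^ r + real (card A') ^ r"
    using power_mean_two[of "real (card A)" "real N - real (card A)" r] r \<open>card A \<le> N\<close> by simp
  also have "\<dots> \<le> real (card {t\<in>tuples N r. monochromatic A (t ` {..<r})})"
    using le by (metis of_nat_add of_nat_le_iff of_nat_power)
  finally show ?thesis unfolding monochromatic_tuples_def .
qed

lemma sum_PiE_power_card_hits:
  fixes lam :: real
  assumes B: "finite B" and S: "S \<subseteq> B"
  shows "(\<Sum>X\<in>PiE {..<m} (\<lambda>_. B). lam ^ card {i\<in>{..<m}. X i \<in> S})
           = (real (card B) - (1 - lam) * real (card S)) ^ m"
proof -
  define g where "g = (\<lambda>u. if u \<in> S then lam else 1)"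
  have "lam ^ card {i\<in>{..<m}. X i \<in> S} = (\<Prod>i<m. g (X i))" for X
    unfolding g_def by (simp add: prod.If_cases Int_def conj_commute)
  then have "(\<Sum>X\<in>PiE {..<m} (\<lambda>_. B). lam ^ card {i\<in>{..<m}. X i \<in> S}) = (\<Prod>i<m. \<Sum>u\<in>B. g u)"
    using prod_sum_PiE[of "{..<m}" "\<lambda>_. B" "\<lambda>_. g"] B by simp
  also have "(\<Sum>u\<in>B. g u) = real (card S) * lam + real (card (B - S))"
    unfolding g_def using B S by (simp add: sum.If_cases Int_absorb1 Diff_eq)
  also have "real (card (B - S)) = real (card B) - real (card S)"
    using B S by (simp add: card_Diff_subset finite_subset card_mono of_nat_diff)
  finally show ?thesis by (simp add: algebra_simps)
qed

(* Markov's inequality for lam ^ (number of hits); its sum over all families factorises. *)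
lemma chernoff_count:
  fixes lam p c :: real
  assumes B: "finite B" and S: "S \<subseteq> B" and pS: "p * real (card B) \<le> real (card S)"
    and lam: "0 < lam" "lam < 1"
  shows "real (card {X\<in>PiE {..<m} (\<lambda>_. B). real (card {i\<in>{..<m}. X i \<in> S}) < c}) * lam powr c
          \<le> (real (card B) * (1 - (1 - lam) * p)) ^ m"
proof -
  define F where "F = {X\<in>PiE {..<m} (\<lambda>_. B). real (card {i\<in>{..<m}. X i \<in> S}) < c}"
  have "real (card F) * lam powr c = (\<Sum>X\<in>F. lam powr c)" by simp
  also have "\<dots> \<le> (\<Sum>X\<in>F. lam ^ card {i\<in>{..<m}. X i \<in> S})"
  proof (intro sum_mono)
    fix X assume "X \<in> F"
    then have "lam powr c \<le> lam powr real (card {i\<in>{..<m}. X i \<in> S})"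
      unfolding F_def using lam by (intro powr_mono') auto
    then show "lam powr c \<le> lam ^ card {i\<in>{..<m}. X i \<in> S}" using lam by (simp add: powr_realpow)
  qed
  also have "\<dots> \<le> (\<Sum>X\<in>PiE {..<m} (\<lambda>_. B). lam ^ card {i\<in>{..<m}. X i \<in> S})"
    using lam B by (intro sum_mono2) (auto simp: F_def finite_PiE)
  also have "\<dots> = (real (card B) - (1 - lam) * real (card S)) ^ m"
    by (rule sum_PiE_power_card_hits[OF B S])
  also have "\<dots> \<le> (real (card B) * (1 - (1 - lam) * p)) ^ m"
  proof (rule power_mono)
    show "real (card B) - (1 - lam) * real (card S) \<le> real (card B) * (1 - (1 - lam) * p)"
      using mult_left_mono[OF pS, of "1 - lam"] lam by (simp add: algebra_simps)
    have "real (card S) \<le> real (card B)" using B S by (simp add: card_mono)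
    then have "(1 - lam) * real (card S) \<le> 1 * real (card B)" using lam by (intro mult_mono) auto
    then show "0 \<le> real (card B) - (1 - lam) * real (card S)" by simp
  qed
  finally show ?thesis unfolding F_def .
qed

definition hyperedges :: "nat \<Rightarrow> (nat \<Rightarrow> nat \<Rightarrow> nat) \<Rightarrow> nat \<Rightarrow> nat set" where
  "hyperedges r X = (\<lambda>i. X i ` {..<r})"

definition cycle_candidates :: "nat \<Rightarrow> nat \<Rightarrow> nat \<Rightarrow> (nat list \<times> nat list) set" where
  "cycle_candidates m N j = {(is, ws). length is = j \<and> length ws = j \<and> distinct is \<and> distinct ws \<and> set is \<subseteq> {..<m} \<and> set ws \<subseteq> {..<N}}"

definition berge_cycles :: "nat \<Rightarrow> nat \<Rightarrow> nat \<Rightarrow> nat \<Rightarrow> (nat \<Rightarrow> nat \<Rightarrow> nat) \<Rightarrow> (nat list \<times> nat list) set" where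
  "berge_cycles r m N j X = {w \<in> cycle_candidates m N j. closed_berge_walk (hyperedges r X) (fst w) (snd w)}"

definition degenerate_indices :: "nat \<Rightarrow> nat \<Rightarrow> (nat \<Rightarrow> nat \<Rightarrow> nat) \<Rightarrow> nat set" where
  "degenerate_indices r m X = {i\<in>{..<m}. \<not> inj_on (X i) {..<r}}"

lemma cycle_candidates_subset: "cycle_candidates m N j \<subseteq> {xs. set xs \<subseteq> {..<m} \<and> length xs = j} \<times> {xs. set xs \<subseteq> {..<N} \<and> length xs = j}"
  unfolding cycle_candidates_def by auto

lemma finite_cycle_candidates: "finite (cycle_candidates m N j)"
  by (rule finite_subset[OF cycle_candidates_subset]) (simp add: finite_lists_length_eq)

lemma card_cycle_candidates_le: "card (cycle_candidates m N j) \<le> m ^ j * N ^ j"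
proof -
  have "card (cycle_candidates m N j) \<le> card ({xs. set xs \<subseteq> {..<m} \<and> length xs = j} \<times> {xs. set xs \<subseteq> {..<N} \<and> length xs = j})"
    by (rule card_mono[OF _ cycle_candidates_subset]) (simp add: finite_lists_length_eq)
  also have "\<dots> = m ^ j * N ^ j" by (simp add: card_cartesian_product card_lists_length_eq)
  finally show ?thesis .
qed

lemma card_families_with_berge_cycle_le:
  assumes w: "(is, ws) \<in> cycle_candidates m N j" and j2: "2 \<le> j"
  shows "card {X\<in>tuple_families N r m. closed_berge_walk (hyperedges r X) is ws}
           \<le> (r * r * N ^ (r - 2)) ^ j * (N ^ r) ^ (m - j)"
proof -
  define Q where "Q = (\<lambda>i. {t\<in>tuples N r. \<forall>l<j. is!l = i \<longrightarrow> ws!l \<in> t ` {..<r} \<and> ws!((l+1) mod j) \<in> t ` {..<r}})"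
  have lis: "length is = j" and lws: "length ws = j" and dis: "distinct is" and dws: "distinct ws"
    and sis: "set is \<subseteq> {..<m}" using w unfolding cycle_candidates_def by auto
  have finQ: "finite (Q i)" for i unfolding Q_def using finite_tuples by simp
  have "card {X\<in>tuple_families N r m. closed_berge_walk (hyperedges r X) is ws} \<le> (\<Prod>i<m. card (Q i))"
    by (rule card_le_prod_if_subset_PiE[OF _ finQ])
      (auto simp: Q_def tuple_families_def PiE_iff extensional_def closed_berge_walk_def hyperedges_def lis)
  also have "\<dots> \<le> (\<Prod>i<m. if i \<in> set is then r * r * N ^ (r - 2) else N ^ r)"
  proof (intro prod_mono conjI)
    fix i
    show "card (Q i) \<le> (if i \<in> set is then r * r * N ^ (r - 2) else N ^ r)"
    proof (cases "i \<in> set is")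
      case True
      then obtain l where l: "l < j" "is ! l = i" using lis by (auto simp: in_set_conv_nth)
      have "Q i \<subseteq> {t\<in>tuples N r. ws!l \<in> t ` {..<r} \<and> ws!((l+1) mod j) \<in> t ` {..<r}}"
        unfolding Q_def using l by auto
      then have "card (Q i) \<le> card {t\<in>tuples N r. ws!l \<in> t ` {..<r} \<and> ws!((l+1) mod j) \<in> t ` {..<r}}"
        by (intro card_mono) (simp_all add: finite_tuples)
      also have "\<dots> \<le> r * r * N ^ (r - 2)"
        using card_tuples_hitting_pair nth_neq_nth_succ_mod[OF dws] j2 l lws by simp
      finally show ?thesis using True by simp
    next
      case False
      have "card (Q i) \<le> card (tuples N r)" unfolding Q_def by (intro card_mono) (auto simp: finite_tuples)
      then show ?thesis using False by (simp add: card_tuples)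
    qed
  qed simp
  also have "\<dots> = (r * r * N ^ (r - 2)) ^ j * (N ^ r) ^ (m - j)"
    using prod_if_mem_set[OF sis dis] lis by simp
  finally show ?thesis .
qed

lemma sum_card_berge_cycles_le:
  assumes j2: "2 \<le> j" and m: "m = C * N" and r2: "2 \<le> r"
  shows "(\<Sum>X\<in>tuple_families N r m. card (berge_cycles r m N j X)) \<le> (C * r * r) ^ j * N ^ (r * m)"
proof -
  have "(\<Sum>X\<in>tuple_families N r m. card (berge_cycles r m N j X)) = (\<Sum>w\<in>cycle_candidates m N j. card {X\<in>tuple_families N r m. closed_berge_walk (hyperedges r X) (fst w) (snd w)})"
    unfolding berge_cycles_def by (rule sum_card_Collect_swap) (auto simp: finite_tuple_families finite_cycle_candidates)
  also have "\<dots> \<le> (\<Sum>w\<in>cycle_candidates m N j. (r * r * N ^ (r - 2)) ^ j * (N ^ r) ^ (m - j))"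
    by (intro sum_mono) (use card_families_with_berge_cycle_le[OF _ j2] in force)
  also have "\<dots> = card (cycle_candidates m N j) * ((r * r * N ^ (r - 2)) ^ j * (N ^ r) ^ (m - j))" by simp
  also have "\<dots> \<le> (C * r * r) ^ j * N ^ (r * m)"
  proof (cases "j \<le> m")
    case True
    have "card (cycle_candidates m N j) * ((r * r * N ^ (r - 2)) ^ j * (N ^ r) ^ (m - j))
        \<le> m ^ j * N ^ j * ((r * r * N ^ (r - 2)) ^ j * (N ^ r) ^ (m - j))"
      using card_cycle_candidates_le by (intro mult_right_mono) auto
    also have "\<dots> = (C * r * r) ^ j * (N ^ j * N ^ j * N ^ ((r - 2) * j) * N ^ (r * (m - j)))"
      unfolding m by (simp add: power_mult_distrib power_mult[symmetric] algebra_simps)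
    also have "\<dots> = (C * r * r) ^ j * N ^ (r * m)"
    proof -
      have "j + j + (r - 2) * j + r * (m - j) = r * m"
      proof -
        have "j + j + (r - 2) * j = r * j" using r2 by (simp add: algebra_simps diff_mult_distrib)
        moreover have "r * j + r * (m - j) = r * m" using True by (simp add: add_mult_distrib2[symmetric])
        ultimately show ?thesis by simp
      qed
      then have "N ^ j * N ^ j * N ^ ((r - 2) * j) * N ^ (r * (m - j)) = N ^ (r * m)" by (metis power_add)
      then show ?thesis by simp
    qed
    finally show ?thesis .
  next
    case False
    have "cycle_candidates m N j = {}"
    proof (rule ccontr)
      assume "cycle_candidates m N j \<noteq> {}"
      then obtain xs ys where "(xs, ys) \<in> cycle_candidates m N j" by auto
      then have "card (set xs) = j" "set xs \<subseteq> {..<m}" unfolding cycle_candidates_def by (auto simp: distinct_card)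
      then have "j \<le> m" by (metis card_lessThan card_mono finite_lessThan)
      then show False using False by simp
    qed
    then show ?thesis by simp
  qed
  finally show ?thesis .
qed

lemma card_families_degenerate_at_le:
  assumes "i < m" "2 \<le> r"
  shows "card {X\<in>tuple_families N r m. \<not> inj_on (X i) {..<r}} \<le> r * r * N ^ (r - 1) * (N ^ r) ^ (m - 1)"
proof -
  define T where "T = (\<lambda>i'. if i' = i then {t\<in>tuples N r. \<not> inj_on t {..<r}} else tuples N r)"
  have "card {X\<in>tuple_families N r m. \<not> inj_on (X i) {..<r}} \<le> (\<Prod>i'<m. card (T i'))"
    by (rule card_le_prod_if_subset_PiE) (auto simp: T_def tuple_families_def PiE_iff extensional_def finite_tuples)
  also have "\<dots> = card (T i) * (\<Prod>i'\<in>{..<m} - {i}. card (T i'))"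
    using assms(1) by (intro prod.remove) auto
  also have "\<dots> = card {t\<in>tuples N r. \<not> inj_on t {..<r}} * (N ^ r) ^ (m - 1)"
    using assms(1) by (simp add: T_def card_tuples)
  also have "\<dots> \<le> r * r * N ^ (r - 1) * (N ^ r) ^ (m - 1)"
    using card_non_injective_tuples[OF assms(2)] by (intro mult_right_mono) auto
  finally show ?thesis .
qed

lemma sum_card_degenerate_le:
  assumes m: "m = C * N" and r2: "2 \<le> r"
  shows "(\<Sum>X\<in>tuple_families N r m. card (degenerate_indices r m X)) \<le> C * r * r * N ^ (r * m)"
proof -
  have "(\<Sum>X\<in>tuple_families N r m. card (degenerate_indices r m X))
      = (\<Sum>i<m. card {X\<in>tuple_families N r m. \<not> inj_on (X i) {..<r}})"
    unfolding degenerate_indices_def by (rule sum_card_Collect_swap) (auto simp: finite_tuple_families)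
  also have "\<dots> \<le> (\<Sum>i<m. r * r * N ^ (r - 1) * (N ^ r) ^ (m - 1))"
    using card_families_degenerate_at_le[OF _ r2] by (intro sum_mono) simp
  also have "\<dots> = C * r * r * (N * N ^ (r - 1) * (N ^ r) ^ (m - 1))" unfolding m by simp
  also have "\<dots> \<le> C * r * r * N ^ (r * m)"
  proof (cases "m = 0")
    case False
    have "N * N ^ (r - 1) = N ^ r" using r2 by (cases r) auto
    moreover have "N ^ r * (N ^ r) ^ (m - 1) = N ^ (r * m)" using False by (cases m) (auto simp: power_mult power_add)
    ultimately show ?thesis by simp
  qed (use m in auto)
  finally show ?thesis .
qed

lemma chernoff_base_lt_1:
  fixes d p :: real
  assumes d0: "0 < d" and d1: "d \<le> 1/2" and p: "0 < p" and p1: "p \<le> 1"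
  shows "(1 - d/2) powr (-((1 - d) * p)) * (1 - (d/2) * p) < 1"
proof -
  define lam where "lam = 1 - d/2"
  define a where "a = (1 - d) * p"
  have l0: "0 < lam" using d1 unfolding lam_def by simp
  have a0: "0 \<le> a" using d1 p unfolding a_def by simp
  have "ln (inverse lam) \<le> inverse lam - 1" using l0 by (intro ln_le_minus_one) simp
  then have lnl: "- ln lam \<le> inverse lam - 1" by (simp add: ln_inverse)
  have e1: "lam powr (-a) = exp (a * (- ln lam))" using l0 unfolding powr_def by simp
  have "a * (- ln lam) \<le> a * (inverse lam - 1)" using lnl a0 by (rule mult_left_mono)
  also have "a * (inverse lam - 1) = a * (d/2) / lam" using l0 unfolding lam_def by (simp add: field_simps)
  finally have x1: "lam powr (-a) \<le> exp (a * (d/2) / lam)" using e1 by simp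
  have x2: "1 - (d/2) * p \<le> exp (- ((d/2) * p))" using exp_ge_add_one_self[of "- ((d/2) * p)"] by simp
  have x2': "0 \<le> 1 - (d/2) * p"
  proof -
    have "(d/2) * p \<le> 1 * 1" using d1 p p1 d0 by (intro mult_mono) auto
    then show ?thesis by simp
  qed
  have "lam powr (-a) * (1 - (d/2) * p) \<le> exp (a * (d/2) / lam) * exp (- ((d/2) * p))"
    using x1 x2 x2' by (intro mult_mono) auto
  also have "\<dots> = exp (a * (d/2) / lam - (d/2) * p)" by (simp add: exp_add[symmetric])
  also have "\<dots> < 1"
  proof -
    have "a < p * lam" unfolding a_def lam_def using d0 p by (simp add: algebra_simps)
    then have "a / lam < p" using l0 by (simp add: divide_less_eq)
    then have "(d/2) * (a / lam) < (d/2) * p" using d0 by (intro mult_strict_left_mono) auto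
    then have "a * (d/2) / lam - (d/2) * p < 0" by (simp add: field_simps)
    then show ?thesis by simp
  qed
  finally show ?thesis unfolding lam_def a_def .
qed

(* Each short Berge cycle causes at most L deletions, hence the factor L. *)
definition defect :: "nat \<Rightarrow> nat \<Rightarrow> nat \<Rightarrow> nat \<Rightarrow> (nat \<Rightarrow> nat \<Rightarrow> nat) \<Rightarrow> nat" where
  "defect r m N L X = card (degenerate_indices r m X) + L * (\<Sum>j\<in>{2..L}. card (berge_cycles r m N j X))"

definition defect_bound :: "nat \<Rightarrow> nat \<Rightarrow> nat \<Rightarrow> nat" where
  "defect_bound C r L = C * r * r + L * (\<Sum>j\<in>{2..L}. (C * r * r) ^ j)"

lemma sum_defect_le:
  assumes m: "m = C * N" and r2: "2 \<le> r"
  shows "(\<Sum>X\<in>tuple_families N r m. defect r m N L X) \<le> defect_bound C r L * N ^ (r * m)"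
proof -
  have "(\<Sum>X\<in>tuple_families N r m. defect r m N L X) = (\<Sum>X\<in>tuple_families N r m. card (degenerate_indices r m X)) + L * (\<Sum>j\<in>{2..L}. \<Sum>X\<in>tuple_families N r m. card (berge_cycles r m N j X))"
    unfolding defect_def by (simp add: sum.distrib sum_distrib_left sum.swap[of _ "{2..L}"])
  also have "\<dots> \<le> C * r * r * N ^ (r * m) + L * (\<Sum>j\<in>{2..L}. (C * r * r) ^ j * N ^ (r * m))"
    using sum_card_degenerate_le[OF m r2] sum_card_berge_cycles_le[OF _ m r2] by (intro add_mono mult_left_mono sum_mono) auto
  also have "\<dots> = defect_bound C r L * N ^ (r * m)" unfolding defect_bound_def by (simp add: add_mult_distrib sum_distrib_right mult.assoc)
  finally show ?thesis .
qed

lemma card_few_monochromatic_le: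
  fixes lam a :: real
  assumes A: "A \<subseteq> {..<N}" and r1: "1 \<le> r" and lam: "0 < lam" "lam < 1"
  shows "real (card {X\<in>tuple_families N r m. real (card {i\<in>{..<m}. X i \<in> monochromatic_tuples N r A}) < a * m})
           \<le> real N ^ (r * m) * (lam powr (-a) * (1 - (1 - lam) * (2 / 2 ^ r))) ^ m"
    (is "real (card ?F) \<le> _")
proof -
  define q where "q = 1 - (1 - lam) * (2 / 2 ^ r)"
  have "real (card ?F) * lam powr (a * m) \<le> (real N ^ r * q) ^ m"
    using chernoff_count[OF finite_tuples _ _ lam, where S="monochromatic_tuples N r A" and p="2 / 2 ^ r" and m=m and c="a * m"]
      card_monochromatic_tuples_ge[OF A r1]
    unfolding tuple_families_def q_def by (simp add: card_tuples monochromatic_tuples_def)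
  moreover have "lam powr (a * m) = (lam powr a) ^ m"
    using lam by (simp add: powr_powr[symmetric] powr_realpow)
  ultimately have "real (card ?F) \<le> (real N ^ r * q) ^ m / (lam powr a) ^ m"
    using lam by (simp add: pos_le_divide_eq)
  also have "\<dots> = real N ^ (r * m) * (lam powr (-a) * q) ^ m"
    using lam by (simp add: powr_minus power_divide power_mult_distrib power_mult divide_inverse power_inverse)
  finally show ?thesis unfolding q_def .
qed

lemma card_unbalanced_families_le:
  fixes lam a :: real
  assumes r1: "1 \<le> r" and m: "m = C * N" and lam: "0 < lam" "lam < 1"
    and q: "(lam powr (-a) * (1 - (1 - lam) * (2 / 2 ^ r))) ^ C \<le> 1/4"
  shows "real (card {X\<in>tuple_families N r m.
            \<exists>A\<in>Pow {..<N}. real (card {i\<in>{..<m}. X i \<in> monochromatic_tuples N r A}) < a * m})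
           \<le> real N ^ (r * m) * (1/2) ^ N"
proof -
  define q where "q = lam powr (-a) * (1 - (1 - lam) * (2 / 2 ^ r))"
  define F where "F = (\<lambda>A. {X\<in>tuple_families N r m.
                      real (card {i\<in>{..<m}. X i \<in> monochromatic_tuples N r A}) < a * m})"
  have "(1 - lam) * (2 / 2 ^ r) \<le> 1 * 1"
    using lam power_increasing[OF r1, of "2::real"] by (intro mult_mono) auto
  then have q0: "0 \<le> q" unfolding q_def by simp
  have "card {X\<in>tuple_families N r m.
            \<exists>A\<in>Pow {..<N}. real (card {i\<in>{..<m}. X i \<in> monochromatic_tuples N r A}) < a * m}
        \<le> (\<Sum>A\<in>Pow {..<N}. card (F A))"
  proof -
    have "{X\<in>tuple_families N r m.
            \<exists>A\<in>Pow {..<N}. real (card {i\<in>{..<m}. X i \<in> monochromatic_tuples N r A}) < a * m}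
          = (\<Union>A\<in>Pow {..<N}. F A)" unfolding F_def by blast
    then show ?thesis by (simp add: card_UN_le)
  qed
  then have "real (card {X\<in>tuple_families N r m.
            \<exists>A\<in>Pow {..<N}. real (card {i\<in>{..<m}. X i \<in> monochromatic_tuples N r A}) < a * m})
        \<le> (\<Sum>A\<in>Pow {..<N}. real (card (F A)))"
    by (metis (mono_tags) of_nat_le_iff of_nat_sum)
  also have "\<dots> \<le> (\<Sum>A\<in>Pow {..<N}. real N ^ (r * m) * q ^ m)"
    using card_few_monochromatic_le[OF _ r1 lam] unfolding F_def q_def by (intro sum_mono) auto
  also have "\<dots> = real N ^ (r * m) * (2 * q ^ C) ^ N"
    unfolding m by (simp add: card_Pow power_mult power_mult_distrib)
  also have "\<dots> \<le> real N ^ (r * m) * (1/2) ^ N"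
    using q q0 unfolding q_def by (intro mult_left_mono power_mono) auto
  finally show ?thesis .
qed

lemma exists_good_family:
  fixes lam a :: real
  assumes r2: "2 \<le> r" and N2: "2 \<le> N" and m: "m = C * N" and l0: "0 < lam" and l1: "lam < 1"
    and q: "(lam powr (-a) * (1 - (1 - lam) * (2 / 2 ^ r))) ^ C \<le> 1/4" and C1: "1 \<le> C"
  shows "\<exists>X\<in>tuple_families N r m. (\<forall>A\<in>Pow {..<N}. a * m \<le> real (card {i\<in>{..<m}. X i \<in> monochromatic_tuples N r A}))
             \<and> defect r m N L X \<le> 2 * defect_bound C r L"
proof -
  define B1 where "B1 = {X\<in>tuple_families N r m. \<exists>A\<in>Pow {..<N}. real (card {i\<in>{..<m}. X i \<in> monochromatic_tuples N r A}) < a * m}"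
  define B2 where "B2 = {X\<in>tuple_families N r m. 2 * defect_bound C r L < defect r m N L X}"
  define T where "T = card (tuple_families N r m)"
  have T: "T = N ^ (r * m)" "0 < T" unfolding T_def using N2 by (simp_all add: card_tuple_families)
  have "real (card B1) \<le> real T * (1/2) ^ N"
    unfolding B1_def T using card_unbalanced_families_le[OF _ m l0 l1 q] r2 by simp
  also have "\<dots> \<le> real T * (1/2) ^ 2" using N2 by (intro mult_left_mono power_decreasing) auto
  finally have c1: "4 * card B1 \<le> T" by (simp add: power2_eq_square)
  have "(\<Sum>X\<in>tuple_families N r m. defect r m N L X) \<le> defect_bound C r L * T"
    using sum_defect_le[OF m r2] unfolding T by simp
  moreover have "0 < defect_bound C r L" unfolding defect_bound_def using C1 r2 by simp
  ultimately have c2: "2 * card B2 \<le> T"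
    unfolding B2_def T_def by (rule card_markov_le[OF finite_tuple_families])
  have "card (B1 \<union> B2) < card (tuple_families N r m)"
    using card_Un_le[of B1 B2] c1 c2 T(2) unfolding T_def by linarith
  moreover have "finite (B1 \<union> B2)" unfolding B1_def B2_def using finite_tuple_families by simp
  ultimately have "\<not> tuple_families N r m \<subseteq> B1 \<union> B2" using card_mono leD by blast
  then obtain X where "X \<in> tuple_families N r m" "X \<notin> B1" "X \<notin> B2" by blast
  then show ?thesis unfolding B1_def B2_def by (auto simp: not_less)
qed

definition deleted_indices :: "nat \<Rightarrow> nat \<Rightarrow> nat \<Rightarrow> nat \<Rightarrow> (nat \<Rightarrow> nat \<Rightarrow> nat) \<Rightarrow> nat set" where
  "deleted_indices r m N L X =
     degenerate_indices r m X \<union> (\<Union>j\<in>{2..L}. \<Union>w\<in>berge_cycles r m N j X. set (fst w))"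

lemma deleted_indices_subset: "deleted_indices r m N L X \<subseteq> {..<m}"
  unfolding deleted_indices_def degenerate_indices_def berge_cycles_def cycle_candidates_def by auto

lemma card_deleted_indices_le: "card (deleted_indices r m N L X) \<le> defect r m N L X"
proof -
  have finW: "\<And>j. finite (berge_cycles r m N j X)"
    unfolding berge_cycles_def using finite_cycle_candidates by simp
  have "card (deleted_indices r m N L X) \<le>
      card (degenerate_indices r m X) + card (\<Union>j\<in>{2..L}. \<Union>w\<in>berge_cycles r m N j X. set (fst w))"
    unfolding deleted_indices_def by (rule card_Un_le)
  also have "card (\<Union>j\<in>{2..L}. \<Union>w\<in>berge_cycles r m N j X. set (fst w))
      \<le> (\<Sum>j\<in>{2..L}. card (\<Union>w\<in>berge_cycles r m N j X. set (fst w)))"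
    by (rule card_UN_le) simp
  also have "\<dots> \<le> (\<Sum>j\<in>{2..L}. \<Sum>w\<in>berge_cycles r m N j X. card (set (fst w)))"
    by (intro sum_mono card_UN_le finW)
  also have "\<dots> \<le> (\<Sum>j\<in>{2..L}. \<Sum>w\<in>berge_cycles r m N j X. L)"
  proof (intro sum_mono)
    fix j w assume j: "j \<in> {2..L}" and w: "w \<in> berge_cycles r m N j X"
    have "length (fst w) = j" using w unfolding berge_cycles_def cycle_candidates_def by auto
    then show "card (set (fst w)) \<le> L" using j card_length[of "fst w"] by simp
  qed
  also have "\<dots> = L * (\<Sum>j\<in>{2..L}. card (berge_cycles r m N j X))"
    by (simp add: sum_distrib_left mult.commute)
  finally show ?thesis unfolding defect_def by simp
qed

lemma berge_girth_gt_surviving: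
  assumes XO: "X \<in> tuple_families N r m"
  shows "berge_girth_gt (hyperedges r X) ({..<m} - deleted_indices r m N L X) L"
  unfolding berge_girth_gt_def
proof (intro allI impI)
  fix "is" ws
  assume h: "closed_berge_walk (hyperedges r X) is ws \<and> distinct is \<and> 2 \<le> length is \<and>
             set is \<subseteq> {..<m} - deleted_indices r m N L X"
  define j where "j = length is"
  show "L < j"
  proof (rule ccontr)
    assume "\<not> L < j"
    have lw: "length ws = j" and dws: "distinct ws"
      using h unfolding closed_berge_walk_def j_def by auto
    have "set ws \<subseteq> {..<N}"
    proof
      fix x assume "x \<in> set ws"
      then obtain l where l: "l < j" "ws!l = x" using lw by (auto simp: in_set_conv_nth)
      then have "x \<in> X (is!l) ` {..<r}" using h unfolding closed_berge_walk_def hyperedges_def j_def by auto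
      moreover have "is!l < m" using h l unfolding j_def by (auto dest: nth_mem)
      ultimately show "x \<in> {..<N}" using XO unfolding tuple_families_def tuples_def by (auto simp: PiE_iff)
    qed
    then have "(is, ws) \<in> berge_cycles r m N j X"
      using h lw dws unfolding berge_cycles_def cycle_candidates_def j_def by auto
    moreover have "j \<in> {2..L}" using h \<open>\<not> L < j\<close> unfolding j_def by auto
    ultimately have "set is \<subseteq> deleted_indices r m N L X" unfolding deleted_indices_def by force
    moreover have "is \<noteq> []" using h by auto
    ultimately show False using h by (metis Diff_iff last_in_set subsetD)
  qed
qed

lemma card_non_monochromatic_le:
  fixes a :: real
  assumes mono: "a * m \<le> real (card {i\<in>{..<m}. X i \<in> monochromatic_tuples N r A})"
    and XO: "X \<in> tuple_families N r m"
  shows "real (card {i\<in>{..<m}. \<not> monochromatic A (hyperedges r X i)}) \<le> m * (1 - a)"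
proof -
  define Mo where "Mo = {i\<in>{..<m}. X i \<in> monochromatic_tuples N r A}"
  have "{i\<in>{..<m}. \<not> monochromatic A (hyperedges r X i)} = {..<m} - Mo"
    using XO unfolding Mo_def monochromatic_tuples_def hyperedges_def tuple_families_def
    by (auto simp: PiE_iff)
  moreover have "Mo \<subseteq> {..<m}" unfolding Mo_def by auto
  ultimately have "card {i\<in>{..<m}. \<not> monochromatic A (hyperedges r X i)} = m - card Mo"
    by (simp add: card_Diff_subset finite_subset)
  moreover have "card Mo \<le> m" using \<open>Mo \<subseteq> {..<m}\<close> by (metis card_lessThan card_mono finite_lessThan)
  ultimately show ?thesis using mono unfolding Mo_def by (simp add: of_nat_diff algebra_simps)
qed

lemma card_bipartite_subgraph_le_family:
  fixes a :: real
  assumes XO: "X \<in> tuple_families N r m"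
    and mono: "\<forall>A\<in>Pow {..<N}. a * m \<le> real (card {i\<in>{..<m}. X i \<in> monochromatic_tuples N r A})"
    and G: "G \<subseteq> {..<m}" and cK: "\<forall>i\<in>G. card (hyperedges r X i) = r" and rL: "r < L"
    and H: "H \<subseteq> (\<Union>i\<in>G. clique_edges (hyperedges r X i))" "bipartite {..<N} H" "girth_gt H L"
  shows "real (card H) \<le> real (r - 1) * (m * (1 - a))"
proof -
  obtain A where A: "A \<subseteq> {..<N}" "\<forall>e\<in>H. card (e \<inter> A) = 1" using H(2) unfolding bipartite_def by blast
  have finG: "finite G" using G finite_subset by blast
  have fK: "\<forall>i\<in>G. finite (hyperedges r X i)" unfolding hyperedges_def by simp
  have "card H \<le> (r - 1) * card {i\<in>G. \<not> monochromatic A (hyperedges r X i)}"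
    by (rule card_bipartite_girth_subgraph_le[OF finG cK fK rL H(1) A(2) H(3)])
  also have "card {i\<in>G. \<not> monochromatic A (hyperedges r X i)} \<le> card {i\<in>{..<m}. \<not> monochromatic A (hyperedges r X i)}"
    using G by (intro card_mono) auto
  finally have "real (card H) \<le> real ((r - 1) * card {i\<in>{..<m}. \<not> monochromatic A (hyperedges r X i)})"
    by (simp only: of_nat_le_iff mult_le_mono2)
  also have "\<dots> = real (r - 1) * real (card {i\<in>{..<m}. \<not> monochromatic A (hyperedges r X i)})" by simp
  also have "\<dots> \<le> real (r - 1) * (m * (1 - a))"
    using card_non_monochromatic_le[OF _ XO] mono A(1) by (simp add: mult_left_mono)
  finally show ?thesis .
qed

lemma graph_from_good_family:
  fixes a d :: real
  assumes r2: "2 \<le> r" and rL: "r < L" and XO: "X \<in> tuple_families N r m" and m1: "1 \<le> m"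
    and mono: "\<forall>A\<in>Pow {..<N}. a * m \<le> real (card {i\<in>{..<m}. X i \<in> monochromatic_tuples N r A})"
    and wt: "real (defect r m N L X) \<le> d * m" and d1: "d \<le> 1/2"
  shows "\<exists>(V :: nat set) E R. simple_graph V E \<and> E \<noteq> {} \<and> cycle_free_len E L \<and>
           card E = R * (r choose 2) \<and> (1 - d) * m \<le> real R \<and>
           (\<forall>H \<subseteq> E. bipartite V H \<and> girth_gt H L \<longrightarrow> real (card H) \<le> real (r - 1) * (m * (1 - a)))"
proof -
  define G where "G = {..<m} - deleted_indices r m N L X"
  have Gm: "G \<subseteq> {..<m}" unfolding G_def by blast
  define K where "K = hyperedges r X"
  define E where "E = (\<Union>i\<in>G. clique_edges (K i))"
  have KN: "\<And>i. i < m \<Longrightarrow> K i \<subseteq> {..<N}"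
    using XO unfolding K_def hyperedges_def tuple_families_def tuples_def by (auto simp: PiE_iff)
  have finG: "finite G" unfolding G_def by simp
  have fK: "\<forall>i\<in>G. finite (K i)" unfolding K_def hyperedges_def by simp
  have cK: "\<forall>i\<in>G. card (K i) = r"
  proof
    fix i assume "i \<in> G"
    then have "inj_on (X i) {..<r}" unfolding G_def deleted_indices_def degenerate_indices_def by auto
    then show "card (K i) = r" unfolding K_def hyperedges_def by (simp add: card_image)
  qed
  have girth: "berge_girth_gt K G L" unfolding G_def K_def by (rule berge_girth_gt_surviving[OF XO])
  have RG: "(1 - d) * m \<le> real (card G)"
  proof -
    have sub: "deleted_indices r m N L X \<subseteq> {..<m}" by (rule deleted_indices_subset)
    then have "card (deleted_indices r m N L X) \<le> m" by (metis card_lessThan card_mono finite_lessThan)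
    moreover have "card G = m - card (deleted_indices r m N L X)"
      unfolding G_def using sub by (simp add: card_Diff_subset finite_subset)
    moreover have "real (card (deleted_indices r m N L X)) \<le> d * m"
      using card_deleted_indices_le[of r m N L X] wt by linarith
    ultimately show ?thesis by (simp add: of_nat_diff algebra_simps)
  qed
  have cE: "card E = card G * (r choose 2)"
    unfolding E_def using card_clique_union[OF finG cK fK girth] r2 rL by simp
  have "E \<noteq> {}"
  proof -
    have "0 < (1 - d) * m" using d1 m1 by simp
    then have "0 < card G" using RG by linarith
    moreover have "0 < r choose 2" using r2 by simp
    ultimately have "0 < card E" using cE by simp
    then show ?thesis by auto
  qed
  moreover have "simple_graph {..<N} E"
    unfolding simple_graph_def E_def clique_edges_def using KN unfolding G_def by auto
  moreover have "cycle_free_len E L" unfolding E_def by (rule cycle_free_len_clique_union[OF cK fK rL girth])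
  moreover have "real (card H) \<le> real (r - 1) * (m * (1 - a))"
    if "H \<subseteq> E" "bipartite {..<N} H" "girth_gt H L" for H
    using that unfolding E_def K_def
    by (rule card_bipartite_subgraph_le_family[OF XO mono Gm cK[unfolded K_def] rL])
  ultimately show ?thesis using cE RG by blast
qed

lemma random_clique_graph:
  fixes d :: real
  assumes r2: "2 \<le> r" and rL: "r < L" and d0: "0 < d" and d1: "d \<le> 1/2"
  shows "\<exists>(m :: nat) (V :: nat set) E R. simple_graph V E \<and> E \<noteq> {} \<and> cycle_free_len E L \<and>
           card E = R * (r choose 2) \<and> (1 - d) * m \<le> real R \<and>
           (\<forall>H \<subseteq> E. bipartite V H \<and> girth_gt H L \<longrightarrow>
              real (card H) \<le> real (r - 1) * (m * (1 - (1 - d) * (2 / 2 ^ r))))"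
proof -
  define p :: real where "p = 2 / 2 ^ r"
  define lam where "lam = 1 - d/2"
  define a where "a = (1 - d) * p"
  have lam: "0 < lam" "lam < 1" unfolding lam_def using d0 d1 by auto
  have p: "0 < p" "p \<le> 1"
    using power_increasing[of 1 r "2::real"] r2 unfolding p_def by auto
  have "lam powr (-a) * (1 - (1 - lam) * p) < 1"
    using chernoff_base_lt_1[OF d0 d1 p] unfolding lam_def a_def by simp
  then obtain C where C: "(lam powr (-a) * (1 - (1 - lam) * p)) ^ C < 1/4"
    using real_arch_pow_inv[of "1/4"] by auto
  have C1: "1 \<le> C" using C by (cases C) auto
  define N where "N = max 2 (nat \<lceil>2 * real (defect_bound C r L) / (d * real C)\<rceil>)"
  define m where "m = C * N"
  have N2: "2 \<le> N" unfolding N_def by simp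
  have large: "2 * real (defect_bound C r L) \<le> d * m"
  proof -
    have "2 * real (defect_bound C r L) / (d * real C) \<le> real N" unfolding N_def by linarith
    then show ?thesis using d0 C1 unfolding m_def by (simp add: divide_le_eq algebra_simps)
  qed
  obtain X where XO: "X \<in> tuple_families N r m"
    and mono: "\<forall>A\<in>Pow {..<N}. a * m \<le> real (card {i\<in>{..<m}. X i \<in> monochromatic_tuples N r A})"
    and wX: "defect r m N L X \<le> 2 * defect_bound C r L"
    using exists_good_family[OF r2 N2 m_def lam less_imp_le[OF C[unfolded p_def]] C1, where L=L] by blast
  have "1 \<le> m" unfolding m_def using C1 N2 by simp
  moreover have "real (defect r m N L X) \<le> real (2 * defect_bound C r L)" using wX by (simp only: of_nat_le_iff)
  then have "real (defect r m N L X) \<le> d * m" using large by simp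
  ultimately have "\<exists>(V :: nat set) E R. simple_graph V E \<and> E \<noteq> {} \<and> cycle_free_len E L \<and>
           card E = R * (r choose 2) \<and> (1 - d) * m \<le> real R \<and>
           (\<forall>H \<subseteq> E. bipartite V H \<and> girth_gt H L \<longrightarrow> real (card H) \<le> real (r - 1) * (m * (1 - a)))"
    by (rule graph_from_good_family[OF r2 rL XO _ mono _ d1])
  then show ?thesis unfolding a_def p_def by (intro exI[of _ m])
qed

lemma one_minus_mult_le_slack:
  fixes d \<epsilon> p :: real
  assumes d0: "0 < d" and d1: "d \<le> 1/2" and de: "d \<le> \<epsilon>/4" and p0: "0 < p" and p1: "p \<le> 1/4"
  shows "1 - (1 - d) * p \<le> (1 - p) * (1 + \<epsilon>) * (1 - d)"
proof -
  have e0: "0 < \<epsilon>" using d0 de by simp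
  have "\<epsilon> * d \<le> \<epsilon> * (1/2)" using d1 e0 by (intro mult_left_mono) auto
  then have "(1 + \<epsilon>) * (1 - d) \<ge> 1 + \<epsilon>/4" using de by (simp add: algebra_simps)
  then have "(1 - p) * ((1 + \<epsilon>) * (1 - d)) \<ge> (1 - p) * (1 + \<epsilon>/4)" using p1 by (intro mult_left_mono) auto
  moreover have "p * \<epsilon> \<le> (1/4) * \<epsilon>" using p1 e0 by (intro mult_right_mono) auto
  then have "(1 - p) * (1 + \<epsilon>/4) \<ge> 1 - p + 3 * \<epsilon> / 16" by (simp add: algebra_simps)
  ultimately have "(1 - p) * (1 + \<epsilon>) * (1 - d) \<ge> 1 - p + 3 * \<epsilon> / 16" by (simp add: mult.assoc)
  moreover have "d * p \<le> (\<epsilon>/4) * (1/4)" using de p1 d0 p0 by (intro mult_mono) auto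
  moreover have "1 - (1 - d) * p = 1 - p + d * p" by (simp add: algebra_simps)
  ultimately show ?thesis using e0 by linarith
qed

lemma clique_graph_ratio_le:
  fixes d \<epsilon> p h :: real and m :: nat
  assumes cE: "card E = R * (r choose 2)" and R: "(1 - d) * m \<le> real R"
    and h: "h \<le> real (r - 1) * (m * (1 - (1 - d) * p))"
    and r2: "2 \<le> r" and d0: "0 < d" and d1: "d \<le> 1/2" and de: "d \<le> \<epsilon>/4"
    and p0: "0 < p" and p1: "p \<le> 1/4"
  shows "h \<le> (1 - p) * (2 / real r) * real (card E) * (1 + \<epsilon>)"
proof -
  have slack: "1 - (1 - d) * p \<le> (1 - p) * (1 + \<epsilon>) * (1 - d)"
    by (rule one_minus_mult_le_slack[OF d0 d1 de p0 p1])
  have r1: "real (r - 1) = real r - 1" using r2 by (simp add: of_nat_diff)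
  have "real (r choose 2) = real r * (real r - 1) / 2"
    unfolding choose_two using r2 by (subst real_of_nat_div) (auto simp: of_nat_diff)
  then have "real (card E) = real R * (real r * (real r - 1) / 2)" using cE by simp
  moreover have "real r \<noteq> 0" using r2 by simp
  ultimately have cE': "(2 / real r) * real (card E) = real R * (real r - 1)"
    by (simp add: divide_simps) (simp add: algebra_simps)
  have "real (r - 1) * (m * (1 - (1 - d) * p)) \<le> (real r - 1) * (m * ((1 - p) * (1 + \<epsilon>) * (1 - d)))"
    unfolding r1 using slack r2 by (intro mult_left_mono) auto
  then have "h \<le> (real r - 1) * (m * ((1 - p) * (1 + \<epsilon>) * (1 - d)))" using h by linarith
  also have "\<dots> = (real r - 1) * (1 - p) * (1 + \<epsilon>) * ((1 - d) * m)" by (simp add: algebra_simps)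
  also have "\<dots> \<le> (real r - 1) * (1 - p) * (1 + \<epsilon>) * real R"
    using R r2 p1 de d0 by (intro mult_left_mono) auto
  also have "\<dots> = (1 - p) * (2 / real r) * real (card E) * (1 + \<epsilon>)" unfolding mult.assoc cE' by simp
  finally show ?thesis .
qed

theorem theorem3:
  fixes \<epsilon> :: real and k :: nat
  assumes "\<epsilon> > 0" and "k \<ge> 2"
  shows "\<exists>(V :: nat set) (E :: nat set set).
           simple_graph V E \<and> E \<noteq> {} \<and> cycle_free_len E (2 * k) \<and>
           (\<forall>H \<subseteq> E. bipartite V H \<and> girth_gt H (2 * k) \<longrightarrow>
              real (card H) \<le> (1 - 1 / 2 ^ (2 * k - 2)) * (2 / (2 * real k - 1)) * real (card E) * (1 + \<epsilon>))"
proof -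
  define r where "r = 2 * k - 1"
  define d where "d = min (1/2) (\<epsilon>/4)"
  have r_Suc: "r = Suc (2 * k - 2)" and r3: "3 \<le> r" and rL: "r < 2 * k"
    unfolding r_def using assms(2) by auto
  have pk: "1 / 2 ^ (2 * k - 2) = (2::real) / 2 ^ r" unfolding r_Suc by simp
  have rk: "2 * real k - 1 = real r" unfolding r_def using assms(2) by (simp add: of_nat_diff)
  have p1: "(2::real) / 2 ^ r \<le> 1/4"
    using power_increasing[OF r3, of "2::real"] by (simp add: divide_le_eq)
  have r2: "2 \<le> r" using r3 by simp
  have d: "0 < d" "d \<le> 1/2" "d \<le> \<epsilon>/4" unfolding d_def using assms(1) by auto
  obtain V :: "nat set" and E and m :: nat and R where G: "simple_graph V E" "E \<noteq> {}" "cycle_free_len E (2 * k)"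
    "card E = R * (r choose 2)" "(1 - d) * m \<le> real R"
    "\<forall>H \<subseteq> E. bipartite V H \<and> girth_gt H (2 * k) \<longrightarrow>
       real (card H) \<le> real (r - 1) * (m * (1 - (1 - d) * (2 / 2 ^ r)))"
    using random_clique_graph[OF r2 rL d(1,2)] by blast
  have "real (card H) \<le> (1 - 1 / 2 ^ (2 * k - 2)) * (2 / (2 * real k - 1)) * real (card E) * (1 + \<epsilon>)"
    if "H \<subseteq> E" "bipartite V H \<and> girth_gt H (2 * k)" for H
  proof -
    have "real (card H) \<le> real (r - 1) * (m * (1 - (1 - d) * (2 / 2 ^ r)))" using G(6) that by blast
    from clique_graph_ratio_le[OF G(4,5) this r2 d _ p1] show ?thesis unfolding pk rk by simp
  qed
  with G(1-3) show ?thesis by blast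
qed

end
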